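(* Let $m\ge 2$ be an integer, let $a\in\mathbb{R}$, and let $X$ be a real random variable on $\mathcal{B}_{m-1}$, regarded as a random variable on $\mathcal{B}_m$ via $T\mapsto X(T^{(m-1)})$. Then \[ \mathbb{E}_m\!\left[X\,a^{U_m}\right]=\frac{a}{m}\,\mathbb{E}_{m-1}\!\left[X\,(a+1)^{U_{m-1}}\right]. \]
   Context: A Ferrers diagram is a left-justified array of cells whose row lengths weakly decrease from top to bottom (rows of length $0$ are allowed). Its half-perimeter is the number of rows plus the number of columns. Its southeast boundary, traversed from the northeast corner to the southwest corner, consists of $n$ unit steps (where $n$ is the half-perimeter), each south or west; south steps correspond to rows and west steps to columns. We write $S_k$ (resp. $W_k$) for the event that the $k$-th step is south (resp. west). If the diagram has $c$ columns, the shifted Ferrers diagram is obtained by inserting $c$ new left-justified rows above it, of lengths $c,c-1,\dots,1$ from top to bottom; the rightmost cell of each inserted row is a diagonal cell (each column contains exactly one diagonal cell). A type-B permutation tableau of size $n$ is a filling of the cells of a shifted Ferrers diagram of half-perimeter $n$ with $0$'s and $1$'s such that: (1) every column contains at least one $1$; (2) no $0$ has both a $1$ above it in its column and a $1$ to its left in its row; (3) if a diagonal cell contains $0$ then every cell of its row contains $0$. Let $\mathcal{B}_n$ be the set of such tableaux ($|\mathcal{B}_n|=2^n n!$), $\mathbb{P}_n$ the uniform probability measure on $\mathcal{B}_n$, and $\mathbb{E}_n$ the corresponding expectation. For $T\in\mathcal{B}_n$ and $1\le k\le n$, let $T^{(k)}\in\mathcal{B}_k$ be the tableau determined by the first $k$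 boundary steps of $T$: delete the rows corresponding to south steps $k+1,\dots,n$ and the columns corresponding to west steps $k+1,\dots,n$ together with their inserted diagonal rows. A restricted $0$ is a cell containing $0$ that either has a $1$ above it in its column or is a diagonal cell. A row (of the shifted diagram, possibly of length $0$) is unrestricted if it contains no restricted $0$. For $T\in\mathcal{B}_n$, $U_k=U_k(T)$ denotes the number of unrestricted rows of $T^{(k)}$; in particular $U_n(T)$ is the number of unrestricted rows of $T$. *)

theory Defs
  imports "HOL-Probability.Probability"
begin

text \<open>
  A type-B permutation tableau is encoded as a pair (w, f):
  w is the boundary word (w ! k = True iff the (k+1)-th step is South), steps indexed 0..n-1;
  rows of the shifted diagram are indexed by steps k (a South step k gives an original row,
  a West step k gives the inserted diagonal row of column k); columns are indexed by West steps j;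
  a larger column index means further to the left.  f k j = True means cell (k,j) contains 1;
  f is required to be False outside the diagram.
\<close>

type_synonym tableau = "bool list \<times> (nat \<Rightarrow> nat \<Rightarrow> bool)"

definition cell :: "bool list \<Rightarrow> nat \<Rightarrow> nat \<Rightarrow> bool" where
  "cell w k j \<longleftrightarrow> k < length w \<and> j < length w \<and> \<not> w ! j \<and>
     (if w ! k then k < j else k \<le> j)"

definition above :: "bool list \<Rightarrow> nat \<Rightarrow> nat \<Rightarrow> nat \<Rightarrow> bool" where
  "above w k' k j \<longleftrightarrow> cell w k' j \<and> cell w k j \<and>
     ((\<not> w ! k' \<and> w ! k) \<or> (\<not> w ! k' \<and> \<not> w ! k \<and> k < k') \<or> (w ! k' \<and> w ! k \<and> k' < k))"

definition diag_cell :: "bool list \<Rightarrow> nat \<Rightarrow> nat \<Rightarrow> bool" where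
  "diag_cell w k j \<longleftrightarrow> cell w k j \<and> k = j"

definition is_tableau :: "nat \<Rightarrow> tableau \<Rightarrow> bool" where
  "is_tableau n T \<longleftrightarrow> (case T of (w, f) \<Rightarrow>
     length w = n \<and>
     (\<forall>k j. f k j \<longrightarrow> cell w k j) \<and>
     (\<forall>j<n. \<not> w ! j \<longrightarrow> (\<exists>k. cell w k j \<and> f k j)) \<and>
     (\<forall>k j. cell w k j \<and> \<not> f k j \<and> (\<exists>k'. above w k' k j \<and> f k' j)
              \<longrightarrow> \<not> (\<exists>j'. j < j' \<and> cell w k j' \<and> f k j')) \<and>
     (\<forall>j. diag_cell w j j \<and> \<not> f j j \<longrightarrow> (\<forall>j'. cell w j j' \<longrightarrow> \<not> f j j')))"

definition tableaux :: "nat \<Rightarrow> tableau set" where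
  "tableaux n = {T. is_tableau n T}"

definition restricted_zero :: "tableau \<Rightarrow> nat \<Rightarrow> nat \<Rightarrow> bool" where
  "restricted_zero T k j \<longleftrightarrow> (case T of (w, f) \<Rightarrow>
     cell w k j \<and> \<not> f k j \<and> ((\<exists>k'. above w k' k j \<and> f k' j) \<or> diag_cell w k j))"

definition unrestricted_row :: "tableau \<Rightarrow> nat \<Rightarrow> bool" where
  "unrestricted_row T k \<longleftrightarrow> k < length (fst T) \<and> \<not> (\<exists>j. restricted_zero T k j)"

definition U :: "tableau \<Rightarrow> nat" where
  "U T = card {k. unrestricted_row T k}"

definition trunc :: "nat \<Rightarrow> tableau \<Rightarrow> tableau" where
  "trunc k T = (case T of (w, f) \<Rightarrow> (take k w, \<lambda>a b. a < k \<and> b < k \<and> f a b))"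

definition E :: "nat \<Rightarrow> (tableau \<Rightarrow> real) \<Rightarrow> real" where
  "E n Y = measure_pmf.expectation (pmf_of_set (tableaux n)) Y"

end

theory Submission
  imports Defs
begin

text \<open>
  Truncation T \<mapsto> T^(n) maps B_(n+1) onto B_n, and the preimages of T \<in> B_n are its one-step
  extensions. Let R be the set of unrestricted rows of T. The South extension has |R| + 1
  unrestricted rows. A West extension is determined by the nonempty set S of 1s in the new
  column, which must lie in R together with the new diagonal row. If the diagonal cell holds 1,
  the unrestricted rows of the extension are exactly S; otherwise they are S together with the
  rows of R above every 1 of the new column. Summing a^U over all extensions of T therefore
  gives 2 a (1 + a)^|R|. Grouping B_m by truncation proves the identity, with the normalisation
  |B_m| = 2 m |B_(m-1)| being the case a = 1 of the same recursion.
\<close>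

section \<open>Sums over subsets\<close>

lemma sum_pow_card_Pow:
  fixes a :: "'a::comm_semiring_1"
  assumes "finite A"
  shows "(\<Sum>S\<in>Pow A. a ^ card S) = (1 + a) ^ card A"
  using prod_add[OF assms, of "\<lambda>_. a" "\<lambda>_. 1"] by (simp add: add.commute)

lemma sum_nonempty_subsets_insert:
  assumes "finite R" "t \<notin> R"
  shows "(\<Sum>S | S \<subseteq> insert t R \<and> S \<noteq> {}. g S)
       = (\<Sum>S\<in>Pow R. g (insert t S)) + (\<Sum>S | S \<subseteq> R \<and> S \<noteq> {}. g S)"
proof -
  have split: "{S. S \<subseteq> insert t R \<and> S \<noteq> {}} = insert t ` Pow R \<union> {S. S \<subseteq> R \<and> S \<noteq> {}}"
  proof (intro set_eqI iffI)
    fix S assume "S \<in> {S. S \<subseteq> insert t R \<and> S \<noteq> {}}"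
    then show "S \<in> insert t ` Pow R \<union> {S. S \<subseteq> R \<and> S \<noteq> {}}"
      by (cases "t \<in> S") (auto intro!: image_eqI[of S _ "S - {t}"])
  qed auto
  have "inj_on (insert t) (Pow R)"
    using assms(2) by (intro inj_onI) (metis PowD insert_ident subsetD)
  then have "(\<Sum>S\<in>insert t ` Pow R. g S) = (\<Sum>S\<in>Pow R. g (insert t S))"
    by (simp add: sum.reindex)
  moreover have "(\<Sum>S\<in>insert t ` Pow R \<union> {S. S \<subseteq> R \<and> S \<noteq> {}}. g S)
      = (\<Sum>S\<in>insert t ` Pow R. g S) + (\<Sum>S | S \<subseteq> R \<and> S \<noteq> {}. g S)"
    using assms by (intro sum.union_disjoint) auto
  ultimately show ?thesis
    unfolding split by simp
qed

lemma sum_nonempty_subsets_pow_card_above: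
  fixes a :: "'a::comm_ring_1" and key :: "'b \<Rightarrow> 'c::linorder"
  assumes "finite R" "inj_on key R"
  shows "(\<Sum>S | S \<subseteq> R \<and> S \<noteq> {}. a ^ card {k\<in>R. k \<in> S \<or> (\<forall>k'\<in>S. key k \<le> key k')})
       = a * (1 + a) ^ card R - a ^ Suc (card R)"
  using assms(1)
proof (induction R rule: finite_remove_induct)
  case empty
  then show ?case by simp
next
  case (remove A)
  txt \<open>Split off the element t of least key: a set containing t keeps exactly itself, and a
    nonempty set avoiding t keeps t in addition to what it keeps within A - {t}.\<close>
  define count where "count B S = card {k\<in>B. k \<in> S \<or> (\<forall>k'\<in>S. key k \<le> key k')}" for B S
  obtain t where "is_arg_min key (\<lambda>k. k \<in> A) t"
    using ex_is_arg_min_if_finite[OF remove.hyps(1,2)] by blast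
  then have t: "t \<in> A" "\<And>k. k \<in> A \<Longrightarrow> key t \<le> key k"
    unfolding is_arg_min_def by auto
  define A' where "A' = A - {t}"
  have t_below: "key t < key k" if "k \<in> A'" for k
  proof -
    have "k \<in> A" "k \<noteq> t"
      using that unfolding A'_def by auto
    moreover have "inj_on key A"
      using assms(2) remove.hyps(3) by (rule inj_on_subset)
    ultimately show ?thesis
      using t by (metis inj_onD order_le_neq_trans)
  qed
  have A: "A = insert t A'" "t \<notin> A'" "finite A'"
    using t(1) remove.hyps(1) unfolding A'_def by auto
  have "count A (insert t S) = Suc (card S)" if "S \<subseteq> A'" for S
  proof -
    have "{k\<in>A. k \<in> insert t S \<or> (\<forall>k'\<in>insert t S. key k \<le> key k')} = insert t S"
      using that A(1) t_below by (auto simp: not_le dest: leD)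
    moreover have "finite S" "t \<notin> S"
      using that A(2,3) finite_subset by auto
    ultimately show ?thesis
      unfolding count_def by simp
  qed
  moreover have "count A S = Suc (count A' S)" if "S \<subseteq> A'" "S \<noteq> {}" for S
  proof -
    have "{k\<in>A. k \<in> S \<or> (\<forall>k'\<in>S. key k \<le> key k')}
        = insert t {k\<in>A'. k \<in> S \<or> (\<forall>k'\<in>S. key k \<le> key k')}"
      using that A(1) t_below by (auto intro: less_imp_le)
    then show ?thesis
      unfolding count_def using A(2,3) by simp
  qed
  ultimately have "(\<Sum>S | S \<subseteq> A \<and> S \<noteq> {}. a ^ count A S)
      = a * (\<Sum>S\<in>Pow A'. a ^ card S) + a * (\<Sum>S | S \<subseteq> A' \<and> S \<noteq> {}. a ^ count A' S)"
    unfolding A(1) using A(2,3)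
    by (simp add: sum_nonempty_subsets_insert sum_distrib_left)
  also have "\<dots> = a * (1 + a) ^ card A' + a * (a * (1 + a) ^ card A' - a ^ Suc (card A'))"
    using remove.IH[OF t(1)] A(3) unfolding count_def A'_def by (simp add: sum_pow_card_Pow)
  also have "\<dots> = a * (1 + a) ^ card A - a ^ Suc (card A)"
    using A by (simp add: algebra_simps)
  finally show ?case
    unfolding count_def .
qed

section \<open>Appending a boundary step\<close>

lemma cell_less_length: "cell w k j \<Longrightarrow> k < length w \<and> j < length w"
  unfolding cell_def by auto

lemma cell_append:
  "cell (w @ [s]) k j \<longleftrightarrow> cell w k j \<or> (j = length w \<and> \<not> s \<and> k \<le> length w)"
  unfolding cell_def by (auto simp: nth_append split: if_splits)

lemma above_append_old_column:
  "j < length w \<Longrightarrow> above (w @ [s]) k' k j \<longleftrightarrow> above w k' k j"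
  unfolding above_def cell_append using cell_less_length[of w] by (auto simp: nth_append)

lemma diag_cell_append_old_column:
  "j < length w \<Longrightarrow> diag_cell (w @ [s]) k j \<longleftrightarrow> diag_cell w k j"
  unfolding diag_cell_def cell_append by auto

lemma cell_append_South [simp]: "cell (w @ [True]) k j \<longleftrightarrow> cell w k j"
  unfolding cell_append by simp

lemma above_append_South [simp]: "above (w @ [True]) k' k j \<longleftrightarrow> above w k' k j"
  using above_append_old_column[of j w True] unfolding above_def
  by (auto dest: cell_less_length)

lemma diag_cell_append_South [simp]: "diag_cell (w @ [True]) k j \<longleftrightarrow> diag_cell w k j"
  unfolding diag_cell_def by simp

lemma cell_append_new_column: "cell (w @ [False]) k (length w) \<longleftrightarrow> k \<le> length w"
  unfolding cell_append by (auto dest: cell_less_length)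

text \<open>Height of row k in the column added by a West step, counted from the top: first the
  inserted diagonal rows, leftmost column first, then the original rows from top to bottom.\<close>
definition row_key :: "bool list \<Rightarrow> nat \<Rightarrow> nat" where
  "row_key w k = (if k < length w \<and> w ! k then length w + 1 + k else length w - k)"

lemma inj_on_row_key: "inj_on (row_key w) {..length w}"
  unfolding row_key_def inj_on_def by (auto split: if_splits)

lemma above_append_new_column:
  "above (w @ [False]) k' k (length w) \<longleftrightarrow>
     k' \<le> length w \<and> k \<le> length w \<and> row_key w k' < row_key w k"
  unfolding above_def row_key_def cell_append_new_column by (auto simp: nth_append)

section \<open>Tableaux and unrestricted rows\<close>

lemma restricted_zero_append_old_column:
  assumes "j < length w" "\<And>k. G k j = g k j"
  shows "restricted_zero (w @ [s], G) k j \<longleftrightarrow> restricted_zero (w, g) k j"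
  unfolding restricted_zero_def prod.case cell_append above_append_old_column[OF assms(1)]
    diag_cell_append_old_column[OF assms(1)] assms(2)
  using assms(1) by auto

lemma restricted_zero_cell: "restricted_zero (w, f) k j \<Longrightarrow> cell w k j"
  unfolding restricted_zero_def by simp

lemma tableau_conditions_iff_restricted_zeros:
  assumes cells: "\<forall>k j. f k j \<longrightarrow> cell w k j"
  shows "(\<forall>k j. cell w k j \<and> \<not> f k j \<and> (\<exists>k'. above w k' k j \<and> f k' j)
            \<longrightarrow> \<not> (\<exists>j'>j. cell w k j' \<and> f k j')) \<and>
         (\<forall>j. diag_cell w j j \<and> \<not> f j j \<longrightarrow> (\<forall>j'. cell w j j' \<longrightarrow> \<not> f j j'))
     \<longleftrightarrow> (\<forall>k j j'. restricted_zero (w, f) k j \<longrightarrow> j < j' \<longrightarrow> \<not> f k j')"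
    (is "?conditions \<longleftrightarrow> ?no_one_left")
proof (intro iffI conjI allI impI)
  fix k j j'
  assume tab: ?conditions and zero: "restricted_zero (w, f) k j" and "j < j'"
  from zero consider "cell w k j" "\<not> f k j" "\<exists>k'. above w k' k j \<and> f k' j"
    | "diag_cell w k j" "\<not> f k j"
    unfolding restricted_zero_def by auto
  then show "\<not> f k j'"
  proof cases
    case 1
    then have "\<not> (\<exists>j'>j. cell w k j' \<and> f k j')"
      using tab by blast
    then show ?thesis
      using cells \<open>j < j'\<close> by blast
  next
    case 2
    then have "k = j" "diag_cell w j j"
      unfolding diag_cell_def by auto
    then have "\<forall>j'. cell w j j' \<longrightarrow> \<not> f j j'"
      using tab 2 by blast
    then show ?thesis
      using cells \<open>k = j\<close> by blast
  qed
next
  fix k j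
  assume no_one_left: ?no_one_left
    and zero: "cell w k j \<and> \<not> f k j \<and> (\<exists>k'. above w k' k j \<and> f k' j)"
  from zero have "restricted_zero (w, f) k j"
    unfolding restricted_zero_def by simp
  then show "\<not> (\<exists>j'>j. cell w k j' \<and> f k j')"
    using no_one_left by blast
next
  fix j j'
  assume no_one_left: ?no_one_left
    and diag: "diag_cell w j j \<and> \<not> f j j" and "cell w j j'"
  from diag \<open>cell w j j'\<close> have "j \<le> j'"
    unfolding diag_cell_def cell_def by auto
  moreover have "restricted_zero (w, f) j j"
    using diag unfolding restricted_zero_def diag_cell_def by simp
  ultimately show "\<not> f j j'"
    using no_one_left diag by (metis le_neq_implies_less)
qed

text \<open>Conditions (2) and (3) of the definition combine into: no 1 lies to the left (at a larger
  column index) of a restricted 0 in its row.\<close>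
lemma is_tableau_iff:
  "is_tableau n (w, f) \<longleftrightarrow>
     length w = n \<and>
     (\<forall>k j. f k j \<longrightarrow> cell w k j) \<and>
     (\<forall>j<n. \<not> w ! j \<longrightarrow> (\<exists>k. cell w k j \<and> f k j)) \<and>
     (\<forall>k j j'. restricted_zero (w, f) k j \<longrightarrow> j < j' \<longrightarrow> \<not> f k j')"
  unfolding is_tableau_def prod.case
  by (intro conj_cong refl) (rule tableau_conditions_iff_restricted_zeros)

lemma is_tableau_length: "is_tableau n (w, f) \<Longrightarrow> length w = n"
  unfolding is_tableau_iff by blast

lemma is_tableau_cell: "is_tableau n (w, f) \<Longrightarrow> f k j \<Longrightarrow> cell w k j"
  unfolding is_tableau_iff by blast

lemma is_tableau_outside: "is_tableau n (w, f) \<Longrightarrow> length w \<le> j \<Longrightarrow> \<not> f k j"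
  using cell_less_length is_tableau_cell by fastforce

definition unrestricted_rows :: "tableau \<Rightarrow> nat set" where
  "unrestricted_rows T = {k. unrestricted_row T k}"

lemma U_eq_card_unrestricted_rows: "U T = card (unrestricted_rows T)"
  unfolding U_def unrestricted_rows_def ..

lemma mem_unrestricted_rows:
  "k \<in> unrestricted_rows (w, f) \<longleftrightarrow> k < length w \<and> (\<forall>j. \<not> restricted_zero (w, f) k j)"
  unfolding unrestricted_rows_def unrestricted_row_def by simp

lemma finite_unrestricted_rows: "finite (unrestricted_rows T)"
  by (rule finite_subset[of _ "{..<length (fst T)}"])
    (auto simp: unrestricted_rows_def unrestricted_row_def)

section \<open>One-step extensions\<close>

fun add_south :: "tableau \<Rightarrow> tableau" where
  "add_south (w, f) = (w @ [True], f)"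

lemma restricted_zero_append_South [simp]:
  "restricted_zero (w @ [True], f) k j \<longleftrightarrow> restricted_zero (w, f) k j"
  unfolding restricted_zero_def by simp

lemma unrestricted_rows_add_south:
  "unrestricted_rows (add_south (w, f)) = insert (length w) (unrestricted_rows (w, f))"
proof -
  have "\<not> restricted_zero (w, f) (length w) j" for j
    using restricted_zero_cell cell_less_length by blast
  then show ?thesis
    by (auto simp: mem_unrestricted_rows less_Suc_eq)
qed

lemma U_add_south: "U (add_south (w, f)) = Suc (U (w, f))"
proof -
  have "length w \<notin> unrestricted_rows (w, f)"
    by (simp add: mem_unrestricted_rows)
  then show ?thesis
    using unrestricted_rows_add_south[of w f] finite_unrestricted_rows[of "(w, f)"]
    by (simp add: U_eq_card_unrestricted_rows)
qed

lemma tableau_add_south: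
  assumes "is_tableau n (w, f)"
  shows "is_tableau (Suc n) (add_south (w, f))"
proof -
  have "j < n \<and> \<not> w ! j" if "j < Suc n" "\<not> (w @ [True]) ! j" for j
    using that is_tableau_length[OF assms] by (auto simp: nth_append less_Suc_eq)
  then show ?thesis
    using assms unfolding add_south.simps is_tableau_iff cell_append_South
      restricted_zero_append_South length_append_singleton
    by blast
qed

lemma trunc_add_south: "is_tableau n (w, f) \<Longrightarrow> trunc n (add_south (w, f)) = (w, f)"
  using is_tableau_length[of n w f] is_tableau_cell[of n w f] cell_less_length[of w]
  by (auto simp: trunc_def intro!: ext)

fun add_west :: "tableau \<Rightarrow> nat set \<Rightarrow> tableau" where
  "add_west (w, f) S = (w @ [False], \<lambda>k j. f k j \<or> (j = length w \<and> k \<in> S))"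

lemma restricted_zero_add_west_old_column:
  "j < length w \<Longrightarrow> restricted_zero (add_west (w, f) S) k j \<longleftrightarrow> restricted_zero (w, f) k j"
  by (simp add: restricted_zero_append_old_column)

lemma restricted_zero_add_west_new_column:
  assumes "is_tableau n (w, f)"
  shows "restricted_zero (add_west (w, f) S) k (length w) \<longleftrightarrow>
    k \<le> length w \<and> k \<notin> S \<and> (k = length w \<or> (\<exists>k'\<in>S. k' \<le> length w \<and> row_key w k' < row_key w k))"
  unfolding restricted_zero_def add_west.simps prod.case above_append_new_column
    diag_cell_def cell_append_new_column
  using is_tableau_outside[OF assms] by auto

lemma restricted_zero_add_west_beyond:
  "length w < j \<Longrightarrow> \<not> restricted_zero (add_west (w, f) S) k j"
  unfolding restricted_zero_def add_west.simps prod.case cell_append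
  by (auto dest: cell_less_length)

lemma unrestricted_rows_add_west:
  assumes T: "is_tableau n (w, f)" and S: "S \<subseteq> {..n}"
  shows "unrestricted_rows (add_west (w, f) S) =
    {k \<in> insert n (unrestricted_rows (w, f)). k \<in> S \<or> (k \<noteq> n \<and> (\<forall>k'\<in>S. row_key w k \<le> row_key w k'))}"
    (is "_ = ?R")
proof -
  note n = is_tableau_length[OF T]
  have no_zero: "(\<forall>j. \<not> restricted_zero (add_west (w, f) S) k j) \<longleftrightarrow>
      (\<forall>j. \<not> restricted_zero (w, f) k j) \<and>
      \<not> (k \<le> n \<and> k \<notin> S \<and> (k = n \<or> (\<exists>k'\<in>S. row_key w k' < row_key w k)))" for k
  proof -
    have "restricted_zero (add_west (w, f) S) k j \<longleftrightarrow>
        (j < n \<and> restricted_zero (w, f) k j) \<or>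
        (j = n \<and> k \<le> n \<and> k \<notin> S \<and> (k = n \<or> (\<exists>k'\<in>S. row_key w k' < row_key w k)))" for j
      using restricted_zero_add_west_old_column[of j w f S k]
        restricted_zero_add_west_new_column[OF T, of S k]
        restricted_zero_add_west_beyond[of w j f S k] S n
      by (cases j n rule: linorder_cases) auto
    moreover have "restricted_zero (w, f) k j \<Longrightarrow> j < n" for j
      using n by (auto dest: restricted_zero_cell cell_less_length)
    ultimately show ?thesis
      by blast
  qed
  have len: "length (fst (add_west (w, f) S)) = Suc n"
    using n by simp
  have not_n: "\<not> restricted_zero (w, f) n j" for j
    using n by (auto dest: restricted_zero_cell cell_less_length)
  show ?thesis
  proof (rule set_eqI)
    fix k
    have "k \<in> unrestricted_rows (add_west (w, f) S) \<longleftrightarrow>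
        k < Suc n \<and> (\<forall>j. \<not> restricted_zero (add_west (w, f) S) k j)"
      unfolding unrestricted_rows_def unrestricted_row_def mem_Collect_eq len by blast
    also have "\<dots> \<longleftrightarrow> k \<in> ?R"
      unfolding no_zero using not_n n by (auto simp: mem_unrestricted_rows not_less less_Suc_eq)
    finally show "k \<in> unrestricted_rows (add_west (w, f) S) \<longleftrightarrow> k \<in> ?R" .
  qed
qed

lemma U_add_west_diagonal_one:
  assumes T: "is_tableau n (w, f)"
    and S: "S \<subseteq> insert n (unrestricted_rows (w, f))" and "n \<in> S"
  shows "U (add_west (w, f) S) = card S"
proof -
  note n = is_tableau_length[OF T]
  have S_le: "S \<subseteq> {..n}"
    using S n by (auto simp: mem_unrestricted_rows)
  have "row_key w n < row_key w k" if "k \<in> unrestricted_rows (w, f)" for k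
    using that n by (simp add: row_key_def mem_unrestricted_rows)
  then have "unrestricted_rows (add_west (w, f) S) = S"
    using S \<open>n \<in> S\<close> unfolding unrestricted_rows_add_west[OF T S_le]
    by (auto dest!: bspec[where x = n] dest: leD)
  then show ?thesis
    unfolding U_eq_card_unrestricted_rows by simp
qed

lemma U_add_west_diagonal_zero:
  assumes T: "is_tableau n (w, f)" and S: "S \<subseteq> unrestricted_rows (w, f)"
  shows "U (add_west (w, f) S) = card {k \<in> unrestricted_rows (w, f).
    k \<in> S \<or> (\<forall>k'\<in>S. row_key w k \<le> row_key w k')}"
proof -
  have n_notin: "n \<notin> unrestricted_rows (w, f)"
    using is_tableau_length[OF T] by (simp add: mem_unrestricted_rows)
  have S_le: "S \<subseteq> {..n}"
    using S is_tableau_length[OF T] by (auto simp: mem_unrestricted_rows)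
  have "unrestricted_rows (add_west (w, f) S) = {k \<in> unrestricted_rows (w, f).
      k \<in> S \<or> (\<forall>k'\<in>S. row_key w k \<le> row_key w k')}"
    unfolding unrestricted_rows_add_west[OF T S_le] using S n_notin by blast
  then show ?thesis
    unfolding U_eq_card_unrestricted_rows by simp
qed

lemma tableau_add_west:
  assumes T: "is_tableau n (w, f)"
    and S: "S \<subseteq> insert n (unrestricted_rows (w, f))" "S \<noteq> {}"
  shows "is_tableau (Suc n) (add_west (w, f) S)"
proof -
  define F where "F k j \<longleftrightarrow> f k j \<or> (j = n \<and> k \<in> S)" for k j
  note n = is_tableau_length[OF T]
  have eq: "add_west (w, f) S = (w @ [False], F)"
    using n by (simp add: F_def fun_eq_iff)
  have cell_new: "cell (w @ [False]) k j \<longleftrightarrow> cell w k j \<or> (j = n \<and> k \<le> n)" for k j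
    unfolding cell_append n by simp
  have S_le: "k \<in> S \<Longrightarrow> k \<le> n" for k
    using S n by (auto simp: mem_unrestricted_rows)
  from T have f_cell: "\<forall>k j. f k j \<longrightarrow> cell w k j"
    and f_column: "\<forall>j<n. \<not> w ! j \<longrightarrow> (\<exists>k. cell w k j \<and> f k j)"
    and f_no_one_left: "\<forall>k j j'. restricted_zero (w, f) k j \<longrightarrow> j < j' \<longrightarrow> \<not> f k j'"
    unfolding is_tableau_iff by blast+
  have F_cell: "\<forall>k j. F k j \<longrightarrow> cell (w @ [False]) k j"
    using f_cell S_le unfolding F_def cell_new by blast
  moreover have "\<exists>k. cell (w @ [False]) k j \<and> F k j" if "j < Suc n" "\<not> (w @ [False]) ! j" for j
  proof (cases "j = n")
    case True
    then show ?thesis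
      using S(2) S_le unfolding cell_new F_def by blast
  next
    case False
    then show ?thesis
      using that f_column n unfolding cell_new F_def by (auto simp: nth_append)
  qed
  moreover have "\<not> F k j'" if zero: "restricted_zero (w @ [False], F) k j" and "j < j'" for k j j'
  proof (cases "j < n")
    case True
    then have old: "restricted_zero (w, f) k j"
      using zero restricted_zero_add_west_old_column[of j w f S k] n unfolding eq by simp
    moreover have "k < n"
      using old n by (auto dest: restricted_zero_cell cell_less_length)
    moreover have "k \<notin> unrestricted_rows (w, f)"
      using old by (auto simp: mem_unrestricted_rows)
    ultimately have "k \<notin> S"
      using S by auto
    then show ?thesis
      using f_no_one_left old \<open>j < j'\<close> unfolding F_def by blast
  next
    case False
    then show ?thesis
      using F_cell[rule_format, of k j'] cell_less_length[of w k j'] \<open>j < j'\<close> n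
      unfolding cell_new by auto
  qed
  ultimately show ?thesis
    unfolding eq is_tableau_iff length_append_singleton n by blast
qed

lemma trunc_add_west: "is_tableau n (w, f) \<Longrightarrow> trunc n (add_west (w, f) S) = (w, f)"
  using is_tableau_length[of n w f] is_tableau_cell[of n w f] cell_less_length[of w]
  by (auto simp: trunc_def intro!: ext)

lemma inj_on_add_west:
  assumes T: "is_tableau n (w, f)"
  shows "inj_on (add_west (w, f)) A"
proof (rule inj_onI)
  fix S S' assume "add_west (w, f) S = add_west (w, f) S'"
  then have "f k (length w) \<or> k \<in> S \<longleftrightarrow> f k (length w) \<or> k \<in> S'" for k
    by (simp add: fun_eq_iff) metis
  then show "S = S'"
    using is_tableau_outside[OF T] by blast
qed

section \<open>Truncation\<close>

lemma trunc_append: "length w = n \<Longrightarrow> trunc n (w @ [s], G) = (w, \<lambda>k j. k < n \<and> j < n \<and> G k j)"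
  unfolding trunc_def by simp

lemma tableau_trunc_append:
  assumes T: "is_tableau (Suc n) (w @ [s], G)"
  shows "is_tableau n (trunc n (w @ [s], G))"
proof -
  define g where "g k j \<longleftrightarrow> k < n \<and> j < n \<and> G k j" for k j
  have n: "length w = n"
    using is_tableau_length[OF T] by simp
  have eq: "trunc n (w @ [s], G) = (w, g)"
    unfolding trunc_append[OF n] g_def ..
  from T have G_cell: "\<forall>k j. G k j \<longrightarrow> cell (w @ [s]) k j"
    and G_column: "\<forall>j<Suc n. \<not> (w @ [s]) ! j \<longrightarrow> (\<exists>k. cell (w @ [s]) k j \<and> G k j)"
    and G_no_one_left: "\<forall>k j j'. restricted_zero (w @ [s], G) k j \<longrightarrow> j < j' \<longrightarrow> \<not> G k j'"
    unfolding is_tableau_iff by blast+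
  have cell_old: "j < n \<Longrightarrow> cell (w @ [s]) k j \<longleftrightarrow> cell w k j" for k j
    unfolding cell_append n by simp
  have g_cell: "g k j \<longleftrightarrow> cell w k j \<and> G k j" for k j
    using G_cell cell_old n unfolding g_def by (auto dest: cell_less_length)
  have "\<exists>k. cell w k j \<and> g k j" if "j < n" "\<not> w ! j" for j
  proof -
    have "\<exists>k. cell (w @ [s]) k j \<and> G k j"
      using that G_column n by (simp add: nth_append)
    then show ?thesis
      using cell_old \<open>j < n\<close> unfolding g_cell by blast
  qed
  moreover have "\<not> g k j'" if zero: "restricted_zero (w, g) k j" and "j < j'" for k j j'
  proof -
    have "j < n"
      using zero n by (auto dest: restricted_zero_cell cell_less_length)
    moreover have "G k' j = g k' j" for k'
      using G_cell cell_old[OF \<open>j < n\<close>] cell_less_length[of w k' j] n unfolding g_def by auto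
    ultimately have "restricted_zero (w @ [s], G) k j"
      using zero restricted_zero_append_old_column[of j w G g s k] n by simp
    then show ?thesis
      using G_no_one_left \<open>j < j'\<close> unfolding g_def by blast
  qed
  ultimately show ?thesis
    unfolding eq is_tableau_iff n using g_cell by blast
qed

lemma add_south_trunc:
  assumes T: "is_tableau (Suc n) (w @ [True], G)"
  shows "add_south (trunc n (w @ [True], G)) = (w @ [True], G)"
proof -
  have "G k j \<Longrightarrow> k < n \<and> j < n" for k j
    using is_tableau_cell[OF T] is_tableau_length[OF T] by (auto dest: cell_less_length)
  then show ?thesis
    using is_tableau_length[OF T] by (auto simp: trunc_append fun_eq_iff)
qed

lemma new_column_one_unrestricted:
  assumes T: "is_tableau (Suc n) (w @ [False], G)" and "G k n" "k < n"
  shows "k \<in> unrestricted_rows (trunc n (w @ [False], G))"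
proof -
  define g where "g k j \<longleftrightarrow> k < n \<and> j < n \<and> G k j" for k j
  have n: "length w = n"
    using is_tableau_length[OF T] by simp
  have "\<not> restricted_zero (w, g) k j" for j
  proof
    assume zero: "restricted_zero (w, g) k j"
    then have "j < n"
      using n by (auto dest: restricted_zero_cell cell_less_length)
    moreover have "G k' j = g k' j" for k'
      using is_tableau_cell[OF T, of k' j] \<open>j < n\<close> n unfolding g_def cell_append
      by (auto dest: cell_less_length)
    ultimately have "restricted_zero (w @ [False], G) k j"
      using zero restricted_zero_append_old_column[of j w G g False k] n by simp
    then show False
      using T \<open>G k n\<close> \<open>j < n\<close> unfolding is_tableau_iff by blast
  qed
  moreover have "trunc n (w @ [False], G) = (w, g)"
    unfolding trunc_append[OF n] g_def ..
  ultimately show ?thesis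
    using \<open>k < n\<close> n by (simp add: mem_unrestricted_rows)
qed

lemma add_west_trunc:
  assumes T: "is_tableau (Suc n) (w @ [False], G)"
  shows "{k. G k n} \<subseteq> insert n (unrestricted_rows (trunc n (w @ [False], G)))"
    and "{k. G k n} \<noteq> {}"
    and "add_west (trunc n (w @ [False], G)) {k. G k n} = (w @ [False], G)"
proof -
  have n: "length w = n"
    using is_tableau_length[OF T] by simp
  have G_cell: "G k j \<Longrightarrow> (k < n \<and> j < n) \<or> (j = n \<and> k \<le> n)" for k j
    using is_tableau_cell[OF T] n unfolding cell_append by (auto dest: cell_less_length)
  then show "{k. G k n} \<subseteq> insert n (unrestricted_rows (trunc n (w @ [False], G)))"
    using new_column_one_unrestricted[OF T] by fastforce
  have "\<not> (w @ [False]) ! n"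
    unfolding n[symmetric] by simp
  then have "\<exists>k. cell (w @ [False]) k n \<and> G k n"
    using T unfolding is_tableau_iff by blast
  then show "{k. G k n} \<noteq> {}"
    by blast
  show "add_west (trunc n (w @ [False], G)) {k. G k n} = (w @ [False], G)"
    using G_cell n by (auto simp: trunc_append fun_eq_iff)
qed

lemma fiber_trunc:
  assumes T: "is_tableau n (w, f)"
  shows "{T \<in> tableaux (Suc n). trunc n T = (w, f)} = insert (add_south (w, f))
    (add_west (w, f) ` {S. S \<subseteq> insert n (unrestricted_rows (w, f)) \<and> S \<noteq> {}})"
    (is "?fiber = ?extensions")
proof
  show "?fiber \<subseteq> ?extensions"
  proof
    fix T assume "T \<in> ?fiber"
    then obtain W G where T': "T = (W, G)" "is_tableau (Suc n) (W, G)" "trunc n (W, G) = (w, f)"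
      unfolding tableaux_def by (cases T) auto
    obtain w' s where W: "W = w' @ [s]"
      using is_tableau_length[OF T'(2)] by (metis Zero_not_Suc length_0_conv rev_exhaust)
    show "T \<in> ?extensions"
    proof (cases s)
      case True
      then show ?thesis
        using add_south_trunc[of n w' G] T' unfolding W True by simp
    next
      case False
      then have "{k. G k n} \<subseteq> insert n (unrestricted_rows (w, f))" "{k. G k n} \<noteq> {}"
          "add_west (w, f) {k. G k n} = T"
        using add_west_trunc[of n w' G] T' unfolding W False by (simp_all del: add_west.simps)
      then show ?thesis
        by blast
    qed
  qed
  show "?extensions \<subseteq> ?fiber"
    using tableau_add_south[OF T] trunc_add_south[OF T] tableau_add_west[OF T] trunc_add_west[OF T]
    unfolding tableaux_def by auto
qed

lemma trunc_in_tableaux: "T \<in> tableaux (Suc n) \<Longrightarrow> trunc n T \<in> tableaux n"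
proof -
  assume "T \<in> tableaux (Suc n)"
  then obtain W G where T: "T = (W, G)" "is_tableau (Suc n) (W, G)"
    unfolding tableaux_def by (cases T) auto
  then obtain w s where "W = w @ [s]"
    using is_tableau_length[OF T(2)] by (metis Zero_not_Suc length_0_conv rev_exhaust)
  then show ?thesis
    using tableau_trunc_append T unfolding tableaux_def by simp
qed

section \<open>Sums over tableaux\<close>

lemma sum_add_west_pow_U:
  fixes a :: "'a::comm_ring_1"
  assumes T: "is_tableau n (w, f)"
  shows "(\<Sum>S | S \<subseteq> insert n (unrestricted_rows (w, f)) \<and> S \<noteq> {}. a ^ U (add_west (w, f) S))
       = 2 * a * (1 + a) ^ U (w, f) - a ^ Suc (U (w, f))"
proof -
  define R where "R = unrestricted_rows (w, f)"
  have R: "finite R" "n \<notin> R" "U (w, f) = card R"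
    using finite_unrestricted_rows is_tableau_length[OF T]
    by (auto simp: R_def U_eq_card_unrestricted_rows mem_unrestricted_rows)
  have "inj_on (row_key w) R"
    using inj_on_row_key by (rule inj_on_subset) (auto simp: R_def mem_unrestricted_rows)
  have "(\<Sum>S | S \<subseteq> insert n R \<and> S \<noteq> {}. a ^ U (add_west (w, f) S))
      = (\<Sum>S\<in>Pow R. a ^ U (add_west (w, f) (insert n S)))
        + (\<Sum>S | S \<subseteq> R \<and> S \<noteq> {}. a ^ U (add_west (w, f) S))"
    using R(1,2) by (rule sum_nonempty_subsets_insert)
  also have "\<dots> = (\<Sum>S\<in>Pow R. a * a ^ card S)
      + (\<Sum>S | S \<subseteq> R \<and> S \<noteq> {}. a ^ card {k\<in>R. k \<in> S \<or> (\<forall>k'\<in>S. row_key w k \<le> row_key w k')})"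
  proof (intro arg_cong2[where f = "(+)"] sum.cong refl)
    fix S assume "S \<in> Pow R"
    then have "U (add_west (w, f) (insert n S)) = card (insert n S)"
      by (intro U_add_west_diagonal_one[OF T]) (auto simp: R_def)
    also have "\<dots> = Suc (card S)"
      using \<open>S \<in> Pow R\<close> R(1,2) by (auto intro: card_insert_disjoint finite_subset)
    finally show "a ^ U (add_west (w, f) (insert n S)) = a * a ^ card S"
      by simp
  next
    fix S assume "S \<in> {S. S \<subseteq> R \<and> S \<noteq> {}}"
    then show "a ^ U (add_west (w, f) S) =
        a ^ card {k\<in>R. k \<in> S \<or> (\<forall>k'\<in>S. row_key w k \<le> row_key w k')}"
      unfolding R_def by (simp del: add_west.simps add: U_add_west_diagonal_zero[OF T])
  qed
  also have "\<dots> = a * (1 + a) ^ card R + (a * (1 + a) ^ card R - a ^ Suc (card R))"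
    using sum_nonempty_subsets_pow_card_above[OF R(1) \<open>inj_on (row_key w) R\<close>, of a]
    by (simp add: sum_pow_card_Pow R(1) flip: sum_distrib_left)
  finally show ?thesis
    unfolding R_def[symmetric] R(3) by (simp add: algebra_simps)
qed

lemma sum_fiber_pow_U:
  fixes a :: "'a::comm_ring_1"
  assumes "T \<in> tableaux n"
  shows "(\<Sum>T' | T' \<in> tableaux (Suc n) \<and> trunc n T' = T. a ^ U T') = 2 * a * (1 + a) ^ U T"
proof -
  obtain w f where wf: "T = (w, f)" and T: "is_tableau n (w, f)"
    using assms unfolding tableaux_def by (cases T) auto
  have "add_south (w, f) \<notin> add_west (w, f) ` {S. S \<subseteq> insert n (unrestricted_rows (w, f)) \<and> S \<noteq> {}}"
    by auto
  then have "(\<Sum>T' | T' \<in> tableaux (Suc n) \<and> trunc n T' = (w, f). a ^ U T')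
      = a ^ U (add_south (w, f))
        + (\<Sum>S | S \<subseteq> insert n (unrestricted_rows (w, f)) \<and> S \<noteq> {}. a ^ U (add_west (w, f) S))"
    unfolding fiber_trunc[OF T] using finite_unrestricted_rows[of "(w, f)"]
    by (simp del: add_south.simps add_west.simps add: sum.reindex[OF inj_on_add_west[OF T]])
  also have "\<dots> = 2 * a * (1 + a) ^ U (w, f)"
    unfolding sum_add_west_pow_U[OF T] U_add_south by simp
  finally show ?thesis
    unfolding wf .
qed

lemma tableaux_0: "tableaux 0 = {([], \<lambda>_ _. False)}"
proof -
  have "is_tableau 0 (w, f) \<longleftrightarrow> (w, f) = ([], \<lambda>_ _. False)" for w f
  proof
    assume T: "is_tableau 0 (w, f)"
    then have "w = []"
      using is_tableau_length by blast
    then show "(w, f) = ([], \<lambda>_ _. False)"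
      using is_tableau_cell[OF T] by (auto simp: cell_def fun_eq_iff)
  next
    assume "(w, f) = ([], \<lambda>_ _. False)"
    then show "is_tableau 0 (w, f)"
      unfolding is_tableau_iff by (simp add: cell_def restricted_zero_def)
  qed
  then show ?thesis
    unfolding tableaux_def by auto
qed

lemma finite_tableaux: "finite (tableaux n)"
proof (induction n)
  case 0
  then show ?case
    by (simp add: tableaux_0)
next
  case (Suc n)
  have "tableaux (Suc n) \<subseteq> (\<Union>T\<in>tableaux n. {T' \<in> tableaux (Suc n). trunc n T' = T})"
    using trunc_in_tableaux by blast
  moreover have "finite {T' \<in> tableaux (Suc n). trunc n T' = T}" if T: "T \<in> tableaux n" for T
  proof -
    obtain w f where "T = (w, f)" "is_tableau n (w, f)"
      using T unfolding tableaux_def by (cases T) auto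
    then show ?thesis
      using finite_unrestricted_rows[of "(w, f)"] by (simp add: fiber_trunc)
  qed
  ultimately show ?case
    using Suc by (meson finite_UN_I finite_subset)
qed

lemma sum_tableaux_Suc:
  "(\<Sum>T'\<in>tableaux (Suc n). h T') =
    (\<Sum>T\<in>tableaux n. \<Sum>T' | T' \<in> tableaux (Suc n) \<and> trunc n T' = T. h T')"
  using finite_tableaux trunc_in_tableaux by (intro sum.group[symmetric]) auto

lemma sum_tableaux_pow_U:
  fixes a :: "'a::comm_ring_1"
  shows "(\<Sum>T\<in>tableaux n. a ^ U T) = 2 ^ n * pochhammer a n"
proof (induction n arbitrary: a)
  case 0
  have "U ([], \<lambda>_ _. False) = 0"
    by (simp add: U_eq_card_unrestricted_rows unrestricted_rows_def unrestricted_row_def)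
  then show ?case
    by (simp add: tableaux_0)
next
  case (Suc n)
  have "(\<Sum>T\<in>tableaux (Suc n). a ^ U T)
      = (\<Sum>T\<in>tableaux n. \<Sum>T' | T' \<in> tableaux (Suc n) \<and> trunc n T' = T. a ^ U T')"
    by (rule sum_tableaux_Suc)
  also have "\<dots> = 2 * a * (\<Sum>T\<in>tableaux n. (a + 1) ^ U T)"
    by (simp add: sum_fiber_pow_U sum_distrib_left add.commute)
  also have "\<dots> = 2 ^ Suc n * pochhammer a (Suc n)"
    by (simp add: Suc pochhammer_rec)
  finally show ?case .
qed

lemma card_tableaux: "real (card (tableaux n)) = 2 ^ n * fact n"
  using sum_tableaux_pow_U[where a = "1 :: real" and n = n] by (simp add: pochhammer_fact)

lemma E_eq_average: "E n Y = (\<Sum>T\<in>tableaux n. Y T) / real (card (tableaux n))"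
proof -
  have "tableaux n \<noteq> {}"
    using card_tableaux[of n] by auto
  then show ?thesis
    unfolding E_def by (simp add: integral_pmf_of_set finite_tableaux)
qed

theorem mainTheorem1:
  fixes m :: nat and a :: real and X :: "tableau \<Rightarrow> real"
  assumes "m \<ge> 2"
  shows "E m (\<lambda>T. X (trunc (m - 1) T) * a ^ U T)
         = a / real m * E (m - 1) (\<lambda>T. X T * (a + 1) ^ U T)"
proof -
  obtain n where m: "m = Suc n"
    using assms by (cases m) auto
  have "(\<Sum>T\<in>tableaux m. X (trunc n T) * a ^ U T)
      = (\<Sum>T\<in>tableaux n. X T * (\<Sum>T' | T' \<in> tableaux m \<and> trunc n T' = T. a ^ U T'))"
    unfolding m sum_tableaux_Suc sum_distrib_left by (intro sum.cong) auto
  also have "\<dots> = 2 * a * (\<Sum>T\<in>tableaux n. X T * (a + 1) ^ U T)"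
    unfolding m by (simp add: sum_fiber_pow_U sum_distrib_left mult_ac add.commute)
  finally have sum: "(\<Sum>T\<in>tableaux m. X (trunc n T) * a ^ U T)
      = 2 * a * (\<Sum>T\<in>tableaux n. X T * (a + 1) ^ U T)" .
  have card: "real (card (tableaux m)) = 2 * real m * real (card (tableaux n))"
    "real (card (tableaux n)) \<noteq> 0" "real m \<noteq> 0"
    unfolding card_tableaux m by simp_all
  have "m - 1 = n"
    using m by simp
  then show ?thesis
    unfolding E_eq_average \<open>m - 1 = n\<close> sum card(1) using card(2,3) by (simp add: field_simps)
qed

end
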